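(* Let $f$ be a nonnegative locally integrable function on $\mathbb R$, $\lambda>0$, and let $\{I_i\}_{i=1}^m$ be a well-separated family of intervals such that for every $i$, $$\lambda\le\frac{\int_{I_i}f(y)\,dy}{|I_i|}\le2\lambda.$$ Then for every $1\le i\le m$ there exists $j_i\in[-50,50]\setminus\{0\}$ such that $$\Big|H\big(f\chi_{\bigcup_{i=1}^mI_i}\big)(x)\Big|\ge\frac\lambda8\qquad\text{for every }x\in\bigcup_{i=1}^mI_{i,j_i}.$$
   Context: $Hf(x)=\frac1\pi\lim_{\varepsilon\to0^+}\int_{|x-y|>\varepsilon}\frac{f(y)}{x-y}dy$. For an interval $I$ and an integer $j\in[-50,50]$, $I_j$ denotes the interval with $|I_j|=|I|$, $I_0=I$, and for $j\ne0$, $\mathrm{dist}(I_j,I)=(|j|-1)|I|$ with $I_j$ to the left of $I$ if $j<0$ and to the right if $j>0$; $I_{i,j}$ denotes $(I_i)_j$. A finite family of intervals $\{I_i\}$ is well-separated if the intervals $101I_i$ (same center, $101$ times the length) are pairwise disjoint. *)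

theory Defs
  imports "HOL-Analysis.Analysis"
begin

definition hilbert :: "(real \<Rightarrow> real) \<Rightarrow> real \<Rightarrow> real" where
  "hilbert f x = Lim (at_right 0)
     (\<lambda>\<epsilon>. (1 / pi) * (LINT y : {y. \<epsilon> < \<bar>x - y\<bar>} | lborel. f y / (x - y)))"

definition locally_integrable :: "(real \<Rightarrow> real) \<Rightarrow> bool" where
  "locally_integrable f \<longleftrightarrow> (\<forall>K. compact K \<longrightarrow> set_integrable lborel K f)"

text \<open>The interval I = [a,b] is shifted to I_j = [a + j|I|, b + j|I|]; this has
  |I_j| = |I|, and for j \<noteq> 0 dist(I_j, I) = (|j|-1)|I|, to the left iff j < 0.\<close>
definition shift_lo :: "real \<Rightarrow> real \<Rightarrow> int \<Rightarrow> real" where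
  "shift_lo a b j = a + of_int j * (b - a)"

definition shift_hi :: "real \<Rightarrow> real \<Rightarrow> int \<Rightarrow> real" where
  "shift_hi a b j = b + of_int j * (b - a)"

definition dil101 :: "real \<Rightarrow> real \<Rightarrow> real set" where
  "dil101 a b = {(a + b) / 2 - 101 * (b - a) / 2 .. (a + b) / 2 + 101 * (b - a) / 2}"

definition well_separated :: "nat \<Rightarrow> (nat \<Rightarrow> real) \<Rightarrow> (nat \<Rightarrow> real) \<Rightarrow> bool" where
  "well_separated m a b \<longleftrightarrow>
     (\<forall>i\<in>{1..m}. \<forall>k\<in>{1..m}. i \<noteq> k \<longrightarrow> dil101 (a i) (b i) \<inter> dil101 (a k) (b k) = {})"

end

theory Submission
  imports Defs
begin

(* For J i = 1 or -1 the interval I_{i,J i} is adjacent to I_i, so for x in it the kernel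
  1/(x - y) has sign J i and size at least 1/(2 |I_i|) on I_i: the near field of I_i contributes
  at least lam/2 to pi H(f chi)(x) in the direction J i.  The far field (all other intervals) is
  Lipschitz on 3 I_i with constant 2 lam sum_k |I_k| / dist(3 I_i, I_k)^2, and since the dilates
  101 I_k are disjoint this sum is at most 2 / (50 * 49 |I_i|); so the far field moves by less
  than lam/100 across 3 I_i.  Choosing J i as the sign of the far field at a i, the two parts
  cannot cancel, and |H(f chi)(x)| >= 0.49 lam / pi >= lam / 8. *)

definition kernel_integral :: "real set \<Rightarrow> (real \<Rightarrow> real) \<Rightarrow> real \<Rightarrow> real" where
  "kernel_integral S f x = (LINT y:S|lborel. f y / (x - y))"

lemma set_integrable_kernel:
  fixes f :: "real \<Rightarrow> real"
  assumes f: "set_integrable lborel S f" and d: "0 < d" "\<forall>y\<in>S. d \<le> \<bar>x - y\<bar>"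
  shows "set_integrable lborel S (\<lambda>y. f y / (x - y))"
proof (rule set_integrable_bound)
  show "set_integrable lborel S (\<lambda>y. f y / d)"
    using f by simp
  have "(\<lambda>y. indicator S y *\<^sub>R f y) \<in> borel_measurable lborel"
    using f unfolding set_integrable_def by (rule borel_measurable_integrable)
  then have "(\<lambda>y. (indicator S y *\<^sub>R f y) / (x - y)) \<in> borel_measurable lborel"
    by measurable
  then show "set_borel_measurable lborel S (\<lambda>y. f y / (x - y))"
    unfolding set_borel_measurable_def by simp
  have "norm (f y / (x - y)) \<le> norm (f y / d)" if "y \<in> S" for y
    using d that by (auto simp: abs_divide intro!: divide_left_mono)
  then show "AE y in lborel. y \<in> S \<longrightarrow> norm (f y / (x - y)) \<le> norm (f y / d)"
    by simp
qed

lemma set_integrable_kernel_closed: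
  fixes f :: "real \<Rightarrow> real"
  assumes "set_integrable lborel S f" "closed S" "x \<notin> S"
  shows "set_integrable lborel S (\<lambda>y. f y / (x - y))"
proof -
  obtain d where "0 < d" "\<forall>y\<in>S. d \<le> \<bar>x - y\<bar>"
    using separate_point_closed[OF assms(2,3)] by (auto simp: dist_real_def)
  with assms(1) show ?thesis by (rule set_integrable_kernel)
qed

lemma hilbert_indicator_outside_closed:
  fixes f :: "real \<Rightarrow> real"
  assumes "closed E" "x \<notin> E"
  shows "hilbert (\<lambda>y. indicator E y * f y) x = kernel_integral E f x / pi"
proof -
  obtain r where r: "0 < r" "\<forall>y\<in>E. r \<le> \<bar>x - y\<bar>"
    using separate_point_closed[OF assms] by (auto simp: dist_real_def)
  have "(LINT y : {y. \<epsilon> < \<bar>x - y\<bar>} | lborel. indicator E y * f y / (x - y)) = kernel_integral E f x"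
    if "\<epsilon> < r" for \<epsilon>
    unfolding kernel_integral_def set_lebesgue_integral_def
    by (rule Bochner_Integration.integral_cong) (use r that in \<open>auto simp: indicator_def\<close>)
  then have "eventually (\<lambda>\<epsilon>. (1 / pi) * (LINT y : {y. \<epsilon> < \<bar>x - y\<bar>} | lborel. indicator E y * f y / (x - y))
      = kernel_integral E f x / pi) (at_right 0)"
    using r(1) by (auto simp: eventually_at_right_field intro!: exI[of _ r])
  then show ?thesis
    unfolding hilbert_def by (intro tendsto_Lim tendsto_eventually) auto
qed

lemma kernel_integral_UN_disjoint:
  fixes f :: "real \<Rightarrow> real" and A :: "'a \<Rightarrow> real set"
  assumes "finite K" "disjoint_family_on A K"
    and "\<And>k. k \<in> K \<Longrightarrow> closed (A k)" "\<And>k. k \<in> K \<Longrightarrow> x \<notin> A k"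
    and "\<And>k. k \<in> K \<Longrightarrow> set_integrable lborel (A k) f"
  shows "kernel_integral (\<Union>k\<in>K. A k) f x = (\<Sum>k\<in>K. kernel_integral (A k) f x)"
  unfolding kernel_integral_def
proof (rule set_integral_finite_UN_AE)
  show "AE y in lborel. y \<in> A k \<and> y \<in> A j \<longrightarrow> k = j" if "k \<in> K" "j \<in> K" for k j
    using assms(2) that by (intro AE_I2) (auto simp: disjoint_family_on_def)
qed (use assms set_integrable_kernel_closed in auto)

lemma kernel_integral_lipschitz:
  fixes f :: "real \<Rightarrow> real"
  assumes f: "\<And>y. y \<in> S \<Longrightarrow> 0 \<le> f y" "set_integrable lborel S f"
    and D: "0 < D" "\<And>y. y \<in> S \<Longrightarrow> D \<le> \<bar>x - y\<bar> \<and> D \<le> \<bar>x' - y\<bar>"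
  shows "\<bar>kernel_integral S f x - kernel_integral S f x'\<bar> \<le> \<bar>x - x'\<bar> / D\<^sup>2 * (LINT y:S|lborel. f y)"
proof -
  have int: "set_integrable lborel S (\<lambda>y. f y / (x - y))" "set_integrable lborel S (\<lambda>y. f y / (x' - y))"
    using D by (auto intro!: set_integrable_kernel[OF f(2)])
  have pointwise: "\<bar>f y / (x - y) - f y / (x' - y)\<bar> \<le> \<bar>x - x'\<bar> / D\<^sup>2 * f y" if y: "y \<in> S" for y
  proof -
    have dist: "D \<le> \<bar>x - y\<bar>" "D \<le> \<bar>x' - y\<bar>" using D y by auto
    then have "x - y \<noteq> 0" "x' - y \<noteq> 0" using D(1) by auto
    then have "f y / (x - y) - f y / (x' - y) = (x' - x) / ((x - y) * (x' - y)) * f y"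
      by (simp add: field_simps)
    then have "\<bar>f y / (x - y) - f y / (x' - y)\<bar> = \<bar>x - x'\<bar> / (\<bar>x - y\<bar> * \<bar>x' - y\<bar>) * f y"
      using f(1)[OF y] by (simp add: abs_mult abs_divide abs_minus_commute)
    also have "\<dots> \<le> \<bar>x - x'\<bar> / D\<^sup>2 * f y"
      using dist D(1) f(1)[OF y]
      by (auto simp: power2_eq_square intro!: mult_right_mono divide_left_mono mult_mono)
    finally show ?thesis .
  qed
  have "\<bar>kernel_integral S f x - kernel_integral S f x'\<bar>
      = \<bar>LINT y:S|lborel. f y / (x - y) - f y / (x' - y)\<bar>"
    unfolding kernel_integral_def using int by simp
  also have "\<dots> \<le> (LINT y:S|lborel. \<bar>f y / (x - y) - f y / (x' - y)\<bar>)"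
    using set_integral_norm_bound[OF set_integral_diff(1)[OF int]] by simp
  also have "\<dots> \<le> (LINT y:S|lborel. \<bar>x - x'\<bar> / D\<^sup>2 * f y)"
    using int f(2) pointwise by (intro set_integral_mono set_integrable_abs) auto
  finally show ?thesis by simp
qed

lemma kernel_integral_near_lower:
  fixes f :: "real \<Rightarrow> real"
  assumes f: "\<And>y. y \<in> S \<Longrightarrow> 0 \<le> f y" "set_integrable lborel S f" and "closed S"
    and s: "\<bar>s\<bar> = 1" and near: "\<And>y. y \<in> S \<Longrightarrow> 0 < s * (x - y) \<and> s * (x - y) \<le> r"
  shows "(LINT y:S|lborel. f y) / r \<le> s * kernel_integral S f x"
proof -
  have "x \<notin> S" using near by force
  then have int: "set_integrable lborel S (\<lambda>y. f y / (x - y))"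
    by (rule set_integrable_kernel_closed[OF f(2) \<open>closed S\<close>])
  have "f y / r \<le> s * (f y / (x - y))" if y: "y \<in> S" for y
  proof -
    have "f y / r \<le> f y / (s * (x - y))"
      using near[OF y] f(1)[OF y] by (intro divide_left_mono) auto
    also have "\<dots> = s * (f y / (x - y))"
      using s near[OF y] by (auto simp: abs_if field_simps split: if_splits)
    finally show ?thesis .
  qed
  then have "(LINT y:S|lborel. f y / r) \<le> (LINT y:S|lborel. s * (f y / (x - y)))"
    using f(2) set_integrable_mult_right[OF int] by (intro set_integral_mono) auto
  then show ?thesis
    unfolding kernel_integral_def set_integral_mult_right[symmetric] by simp
qed

lemma sum_increments_disjoint_le:
  fixes s e :: "'a \<Rightarrow> real" and g :: "real \<Rightarrow> real"
  assumes "finite K"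
    and "\<forall>k\<in>K. L \<le> s k \<and> s k \<le> e k"
    and "\<forall>k\<in>K. \<forall>j\<in>K. k \<noteq> j \<longrightarrow> e k < s j \<or> e j < s k"
    and "mono_on {L..} g" "\<forall>u\<ge>L. g u \<le> M"
  shows "(\<Sum>k\<in>K. g (e k) - g (s k)) \<le> M - g L"
  using assms
proof (induction K arbitrary: L rule: finite_remove_induct)
  case empty
  then show ?case by simp
next
  case (remove K)
  obtain k0 where k0: "k0 \<in> K" "\<And>k. k \<in> K \<Longrightarrow> s k0 \<le> s k"
    using arg_min_if_finite[OF remove.hyps(1,2), of s] by (meson not_less)
  have after_k0: "\<forall>k\<in>K - {k0}. e k0 \<le> s k \<and> s k \<le> e k"
  proof
    fix k assume k: "k \<in> K - {k0}"
    have "s k0 \<le> s k" using k0(2) k by simp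
    moreover have "e k0 < s k \<or> e k < s k0" "s k \<le> e k"
      using remove.prems(1,2) k k0(1) by auto
    ultimately show "e k0 \<le> s k \<and> s k \<le> e k" by linarith
  qed
  have L_k0: "L \<le> s k0" "s k0 \<le> e k0" using remove.prems(1) k0(1) by auto
  have "(\<Sum>k\<in>K - {k0}. g (e k) - g (s k)) \<le> M - g (e k0)"
  proof (rule remove.IH[OF k0(1) after_k0])
    show "mono_on {e k0..} g"
      by (rule mono_on_subset[OF remove.prems(3)]) (use L_k0 in auto)
  qed (use remove.prems L_k0 in auto)
  moreover have "g L \<le> g (s k0)"
    by (rule mono_onD[OF remove.prems(3)]) (use L_k0 in auto)
  ultimately show ?case
    using k0(1) remove.hyps(1) by (simp add: sum.remove)
qed

lemma sum_length_div_sq_le: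
  fixes s e :: "'a \<Rightarrow> real"
  assumes "finite K" "0 < r"
    and "\<forall>k\<in>K. p + r \<le> s k \<and> s k \<le> e k"
    and "\<forall>k\<in>K. \<forall>j\<in>K. k \<noteq> j \<longrightarrow> e k < s j \<or> e j < s k"
  shows "(\<Sum>k\<in>K. (e k - s k) / (e k - p)\<^sup>2) \<le> 1 / r"
proof -
  \<comment> \<open>each term is at most the increment of \<open>g\<close> over \<open>[s k, e k]\<close>, and these increments telescope\<close>
  define g where "g t = - 1 / (t - p)" for t
  have "(\<Sum>k\<in>K. (e k - s k) / (e k - p)\<^sup>2) \<le> (\<Sum>k\<in>K. g (e k) - g (s k))"
  proof (rule sum_mono)
    fix k assume k: "k \<in> K"
    have s: "0 < s k - p" "s k - p \<le> e k - p" using assms(2,3) k by fastforce+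
    have "(e k - s k) / (e k - p)\<^sup>2 \<le> (e k - s k) / ((s k - p) * (e k - p))"
      using s by (auto simp: power2_eq_square intro!: divide_left_mono mult_right_mono)
    also have "\<dots> = g (e k) - g (s k)"
      using s by (simp add: g_def field_simps)
    finally show "(e k - s k) / (e k - p)\<^sup>2 \<le> g (e k) - g (s k)" .
  qed
  also have "\<dots> \<le> 0 - g (p + r)"
  proof (rule sum_increments_disjoint_le[where g = g and L = "p + r"])
    show "mono_on {p + r..} g"
      using assms(2) by (auto simp: g_def intro!: mono_onI divide_left_mono)
    show "\<forall>u\<ge>p + r. g u \<le> 0"
      using assms(2) by (auto simp: g_def)
  qed (use assms in auto)
  also have "\<dots> = 1 / r" by (simp add: g_def)
  finally show ?thesis .
qed

lemma sum_length_div_sq_dist_right_le: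
  fixes a b :: "'a \<Rightarrow> real"
  assumes "finite K" "0 < c" "0 < r"
    and len: "\<forall>k\<in>K. a k < b k"
    and right: "\<forall>k\<in>K. v + r \<le> a k - c * (b k - a k)"
    and apart: "\<forall>k\<in>K. \<forall>j\<in>K. k \<noteq> j \<longrightarrow>
      b k + c * (b k - a k) < a j - c * (b j - a j) \<or> b j + c * (b j - a j) < a k - c * (b k - a k)"
  shows "(\<Sum>k\<in>K. (b k - a k) / (a k - v)\<^sup>2) \<le> 1 / (c * r)"
proof -
  have dil_pos: "0 < c * (b k - a k)" if "k \<in> K" for k
    using len that assms(2) by simp
  \<comment> \<open>the left margins \<open>[a k - c (b k - a k), a k]\<close> of the dilated intervals are disjoint\<close>
  have "(\<Sum>k\<in>K. (a k - (a k - c * (b k - a k))) / (a k - v)\<^sup>2) \<le> 1 / r"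
  proof (rule sum_length_div_sq_le)
    show "\<forall>k\<in>K. \<forall>j\<in>K. k \<noteq> j \<longrightarrow> a k < a j - c * (b j - a j) \<or> a j < a k - c * (b k - a k)"
      using apart len dil_pos by fastforce
  qed (use assms(1,3) right dil_pos in fastforce)+
  then have "c * (\<Sum>k\<in>K. (b k - a k) / (a k - v)\<^sup>2) \<le> 1 / r"
    by (simp add: sum_distrib_left)
  then have "c * (\<Sum>k\<in>K. (b k - a k) / (a k - v)\<^sup>2) / c \<le> 1 / r / c"
    by (rule divide_right_mono) (use assms(2) in simp)
  then show ?thesis
    using assms(2) by (simp add: mult.commute)
qed

(* max (a k - v) (u - b k) is the distance between [u, v] and [a k, b k]; the intervals left
  of [u, v] are reduced to the right-hand case by the reflection x \<mapsto> - x. *)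
lemma sum_length_div_sq_gap_le:
  fixes a b :: "'a \<Rightarrow> real"
  assumes "finite K" "0 < c" "0 < r" "u \<le> v"
    and len: "\<forall>k\<in>K. a k < b k"
    and side: "\<forall>k\<in>K. v + r \<le> a k - c * (b k - a k) \<or> b k + c * (b k - a k) \<le> u - r"
    and apart: "\<forall>k\<in>K. \<forall>j\<in>K. k \<noteq> j \<longrightarrow>
      b k + c * (b k - a k) < a j - c * (b j - a j) \<or> b j + c * (b j - a j) < a k - c * (b k - a k)"
  shows "(\<Sum>k\<in>K. (b k - a k) / (max (a k - v) (u - b k))\<^sup>2) \<le> 2 / (c * r)"
proof -
  define R where "R = {k\<in>K. v + r \<le> a k - c * (b k - a k)}"
  have dil_pos: "0 < c * (b k - a k)" if "k \<in> K" for k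
    using len that assms(2) by simp
  have max_R: "max (a k - v) (u - b k) = a k - v" if "k \<in> R" for k
    using that len dil_pos assms(3,4) unfolding R_def by (fastforce simp: max_def)
  have left: "b k + c * (b k - a k) \<le> u - r" if "k \<in> K - R" for k
    using that side unfolding R_def by auto
  have max_L: "max (a k - v) (u - b k) = - b k - - u" if "k \<in> K - R" for k
    using left[OF that] that dil_pos assms(3,4) len by (fastforce simp: max_def)
  have "(\<Sum>k\<in>R. (b k - a k) / (max (a k - v) (u - b k))\<^sup>2) = (\<Sum>k\<in>R. (b k - a k) / (a k - v)\<^sup>2)"
    using max_R by simp
  also have "\<dots> \<le> 1 / (c * r)"
    using assms(1-3) len apart unfolding R_def by (intro sum_length_div_sq_dist_right_le) auto
  finally have sum_R: "(\<Sum>k\<in>R. (b k - a k) / (max (a k - v) (u - b k))\<^sup>2) \<le> 1 / (c * r)" .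
  have "(\<Sum>k\<in>K - R. (b k - a k) / (max (a k - v) (u - b k))\<^sup>2)
      = (\<Sum>k\<in>K - R. (- a k - - b k) / (- b k - - u)\<^sup>2)"
    using max_L by simp
  also have "\<dots> \<le> 1 / (c * r)"
  proof (rule sum_length_div_sq_dist_right_le)
    show "\<forall>k\<in>K - R. \<forall>j\<in>K - R. k \<noteq> j \<longrightarrow> - a k + c * (- a k - - b k) < - b j - c * (- a j - - b j) \<or>
        - a j + c * (- a j - - b j) < - b k - c * (- a k - - b k)"
      using apart by (auto simp: algebra_simps)
  qed (use assms(1-3) len left in \<open>auto simp: algebra_simps\<close>)
  finally have sum_L: "(\<Sum>k\<in>K - R. (b k - a k) / (max (a k - v) (u - b k))\<^sup>2) \<le> 1 / (c * r)" .
  have "R \<subseteq> K" unfolding R_def by auto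
  with assms(1) sum_R sum_L show ?thesis
    by (simp add: sum.subset_diff[of R K])
qed

lemma kernel_integral_sum_variation:
  fixes f :: "real \<Rightarrow> real" and a b :: "'a \<Rightarrow> real"
  assumes f: "\<And>y. 0 \<le> f y" "\<And>k. k \<in> K \<Longrightarrow> set_integrable lborel {a k..b k} f"
    and avg: "\<And>k. k \<in> K \<Longrightarrow> (LINT y:{a k..b k}|lborel. f y) \<le> C * (b k - a k)"
    and gap: "\<And>k. k \<in> K \<Longrightarrow> 0 < max (a k - v) (u - b k)"
    and x: "x \<in> {u..v}" "x' \<in> {u..v}"
  shows "\<bar>(\<Sum>k\<in>K. kernel_integral {a k..b k} f x) - (\<Sum>k\<in>K. kernel_integral {a k..b k} f x')\<bar>
    \<le> \<bar>x - x'\<bar> * C * (\<Sum>k\<in>K. (b k - a k) / (max (a k - v) (u - b k))\<^sup>2)"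
proof -
  have "\<bar>kernel_integral {a k..b k} f x - kernel_integral {a k..b k} f x'\<bar>
      \<le> \<bar>x - x'\<bar> * C * ((b k - a k) / (max (a k - v) (u - b k))\<^sup>2)" if k: "k \<in> K" for k
  proof -
    have "\<bar>kernel_integral {a k..b k} f x - kernel_integral {a k..b k} f x'\<bar>
        \<le> \<bar>x - x'\<bar> / (max (a k - v) (u - b k))\<^sup>2 * (LINT y:{a k..b k}|lborel. f y)"
      using x gap[OF k] by (intro kernel_integral_lipschitz f(1) f(2)[OF k]) auto
    also have "\<dots> \<le> \<bar>x - x'\<bar> / (max (a k - v) (u - b k))\<^sup>2 * (C * (b k - a k))"
      by (intro mult_left_mono avg[OF k]) simp
    finally show ?thesis by simp
  qed
  then have "(\<Sum>k\<in>K. \<bar>kernel_integral {a k..b k} f x - kernel_integral {a k..b k} f x'\<bar>)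
      \<le> \<bar>x - x'\<bar> * C * (\<Sum>k\<in>K. (b k - a k) / (max (a k - v) (u - b k))\<^sup>2)"
    unfolding sum_distrib_left by (rule sum_mono)
  moreover have "\<bar>(\<Sum>k\<in>K. kernel_integral {a k..b k} f x) - (\<Sum>k\<in>K. kernel_integral {a k..b k} f x')\<bar>
      \<le> (\<Sum>k\<in>K. \<bar>kernel_integral {a k..b k} f x - kernel_integral {a k..b k} f x'\<bar>)"
    unfolding sum_subtractf[symmetric] by (rule sum_abs)
  ultimately show ?thesis by linarith
qed

locale averaged_separated_intervals =
  fixes f :: "real \<Rightarrow> real" and lam :: real and m :: nat and a b :: "nat \<Rightarrow> real"
  assumes f_nonneg: "\<And>y. 0 \<le> f y"
    and f_loc: "locally_integrable f"
    and lam_pos: "0 < lam"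
    and intervals: "\<And>i. i \<in> {1..m} \<Longrightarrow> a i < b i"
    and sep: "well_separated m a b"
    and avg: "\<And>i. i \<in> {1..m} \<Longrightarrow>
       lam \<le> (LINT y : {a i..b i} | lborel. f y) / (b i - a i) \<and>
       (LINT y : {a i..b i} | lborel. f y) / (b i - a i) \<le> 2 * lam"
begin

lemma set_integrable_interval: "set_integrable lborel {a k..b k} f"
  using f_loc unfolding locally_integrable_def by auto

lemma integral_bounds:
  assumes "k \<in> {1..m}"
  shows "lam * (b k - a k) \<le> (LINT y:{a k..b k}|lborel. f y)"
    and "(LINT y:{a k..b k}|lborel. f y) \<le> 2 * lam * (b k - a k)"
  using avg[OF assms] intervals[OF assms] by (simp_all add: le_divide_eq divide_le_eq)

lemma dilations_apart:
  assumes "i \<in> {1..m}" "k \<in> {1..m}" "i \<noteq> k"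
  shows "b i + 50 * (b i - a i) < a k - 50 * (b k - a k) \<or> b k + 50 * (b k - a k) < a i - 50 * (b i - a i)"
proof -
  have dil: "dil101 (a j) (b j) = {a j - 50 * (b j - a j) .. b j + 50 * (b j - a j)}" for j
    unfolding dil101_def by (rule arg_cong2[where f = atLeastAtMost]) (simp_all add: field_simps)
  have "dil101 (a i) (b i) \<inter> dil101 (a k) (b k) = {}"
    using sep assms unfolding well_separated_def by auto
  then show ?thesis
    using intervals[OF assms(1)] intervals[OF assms(2)] unfolding dil
    by (auto simp: max_def min_def split: if_splits)
qed

(* {2 * a i - b i .. 2 * b i - a i} is 3 I_i, which contains I_{i,-1} and I_{i,1}. *)
lemma outside_other_intervals:
  assumes "i \<in> {1..m}" "k \<in> {1..m}" "k \<noteq> i" "x \<in> {2 * a i - b i .. 2 * b i - a i}"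
  shows "x \<notin> {a k..b k}"
  using dilations_apart[OF assms(1,2) assms(3)[symmetric]] assms(4)
    intervals[OF assms(1)] intervals[OF assms(2)]
  by auto

definition far_field :: "nat \<Rightarrow> real \<Rightarrow> real" where
  "far_field i x = (\<Sum>k\<in>{1..m} - {i}. kernel_integral {a k..b k} f x)"

lemma hilbert_split:
  assumes i: "i \<in> {1..m}" and x: "x \<in> {2 * a i - b i .. 2 * b i - a i}" "x \<notin> {a i..b i}"
  shows "hilbert (\<lambda>y. indicator (\<Union>k\<in>{1..m}. {a k..b k}) y * f y) x
    = (kernel_integral {a i..b i} f x + far_field i x) / pi"
proof -
  have x_out: "x \<notin> {a k..b k}" if "k \<in> {1..m}" for k
    using outside_other_intervals[OF i that] x by (cases "k = i") auto
  have "disjoint_family_on (\<lambda>k. {a k..b k}) {1..m}"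
    unfolding disjoint_family_on_def
    using dilations_apart intervals by fastforce
  then have "kernel_integral (\<Union>k\<in>{1..m}. {a k..b k}) f x = (\<Sum>k\<in>{1..m}. kernel_integral {a k..b k} f x)"
    using x_out set_integrable_interval by (intro kernel_integral_UN_disjoint) auto
  also have "\<dots> = kernel_integral {a i..b i} f x + far_field i x"
    unfolding far_field_def using i by (simp add: sum.remove)
  finally show ?thesis
    using x_out by (subst hilbert_indicator_outside_closed) (auto intro: closed_UN)
qed

lemma far_field_variation:
  assumes i: "i \<in> {1..m}" and x: "x \<in> {2 * a i - b i .. 2 * b i - a i}"
  shows "\<bar>far_field i x - far_field i (a i)\<bar> \<le> lam / 100"
proof -
  define l where "l = b i - a i"
  define K where "K = {1..m} - {i}"
  have l: "0 < l" using intervals[OF i] by (simp add: l_def)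
  have K: "k \<in> {1..m}" "i \<noteq> k" if "k \<in> K" for k
    using that unfolding K_def by auto
  have side: "2 * b i - a i + 49 * l \<le> a k - 50 * (b k - a k) \<or> b k + 50 * (b k - a k) \<le> 2 * a i - b i - 49 * l"
    if "k \<in> K" for k
    using dilations_apart[OF i K[OF that]] by (auto simp: l_def)
  have "\<bar>far_field i x - far_field i (a i)\<bar>
      \<le> \<bar>x - a i\<bar> * (2 * lam) * (\<Sum>k\<in>K. (b k - a k) / (max (a k - (2 * b i - a i)) (2 * a i - b i - b k))\<^sup>2)"
    unfolding far_field_def K_def[symmetric]
  proof (rule kernel_integral_sum_variation[OF f_nonneg set_integrable_interval])
    show "(LINT y:{a k..b k}|lborel. f y) \<le> 2 * lam * (b k - a k)" if "k \<in> K" for k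
      using integral_bounds(2)[OF K(1)[OF that]] .
    show "0 < max (a k - (2 * b i - a i)) (2 * a i - b i - b k)" if "k \<in> K" for k
      using side[OF that] intervals[OF K(1)[OF that]] l by (auto simp: max_def)
  qed (use x intervals[OF i] in auto)
  also have "\<dots> \<le> (2 * l) * (2 * lam) * (2 / (50 * (49 * l)))"
  proof (intro mult_mono)
    show "(\<Sum>k\<in>K. (b k - a k) / (max (a k - (2 * b i - a i)) (2 * a i - b i - b k))\<^sup>2) \<le> 2 / (50 * (49 * l))"
    proof (rule sum_length_div_sq_gap_le)
      show "\<forall>k\<in>K. \<forall>j\<in>K. k \<noteq> j \<longrightarrow> b k + 50 * (b k - a k) < a j - 50 * (b j - a j) \<or>
          b j + 50 * (b j - a j) < a k - 50 * (b k - a k)"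
        using dilations_apart K by blast
    qed (use l side intervals intervals[OF i] K K_def in auto)
    show "0 \<le> (\<Sum>k\<in>K. (b k - a k) / (max (a k - (2 * b i - a i)) (2 * a i - b i - b k))\<^sup>2)"
      using intervals K by (intro sum_nonneg divide_nonneg_nonneg) (auto simp: less_imp_le)
  qed (use x l lam_pos in \<open>auto simp: l_def\<close>)
  also have "\<dots> \<le> lam / 100"
    using l lam_pos by (simp add: field_simps)
  finally show ?thesis .
qed

lemma hilbert_lower_bound:
  assumes i: "i \<in> {1..m}" and s: "s \<in> {-1, 1}" and sign: "0 \<le> of_int s * far_field i (a i)"
    and x: "shift_lo (a i) (b i) s < x" "x < shift_hi (a i) (b i) s"
  shows "lam / 8 \<le> \<bar>hilbert (\<lambda>y. indicator (\<Union>k\<in>{1..m}. {a k..b k}) y * f y) x\<bar>"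
proof -
  define l where "l = b i - a i"
  define N where "N = kernel_integral {a i..b i} f x"
  have near: "0 < of_int s * (x - y) \<and> of_int s * (x - y) \<le> 2 * l" if "y \<in> {a i..b i}" for y
    using s x that by (auto simp: shift_lo_def shift_hi_def l_def)
  have x_near: "x \<in> {2 * a i - b i .. 2 * b i - a i}" "x \<notin> {a i..b i}"
    using s x near[of x] by (auto simp: shift_lo_def shift_hi_def)
  have "lam / 2 \<le> (LINT y:{a i..b i}|lborel. f y) / (2 * l)"
    using integral_bounds(1)[OF i] intervals[OF i] by (simp add: l_def field_simps)
  also have "\<dots> \<le> of_int s * N"
    unfolding N_def using s near
    by (intro kernel_integral_near_lower f_nonneg set_integrable_interval) auto
  finally have N_bound: "lam / 2 \<le> of_int s * N" .
  have "far_field i (a i) - lam / 100 \<le> far_field i x" "far_field i x \<le> far_field i (a i) + lam / 100"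
    using far_field_variation[OF i x_near(1)] unfolding abs_le_iff by linarith+
  then have F_bound: "- (lam / 100) \<le> of_int s * far_field i x"
    using s sign by auto
  have "49 / 100 * lam \<le> \<bar>N + far_field i x\<bar>"
    using N_bound F_bound s by (auto simp: algebra_simps abs_if)
  moreover have "pi \<le> 16 / 5"
    using pi_approx(2) by simp
  ultimately have "49 / 100 * lam / (16 / 5) \<le> \<bar>N + far_field i x\<bar> / pi"
    using pi_gt_zero by (intro frac_le) auto
  moreover have "lam / 8 \<le> 49 / 100 * lam / (16 / 5)"
    using lam_pos by simp
  ultimately have "lam / 8 \<le> \<bar>N + far_field i x\<bar> / pi"
    by linarith
  then show ?thesis
    using hilbert_split[OF i x_near] by (simp add: N_def abs_divide)
qed

end

theorem lemma3p8:
  fixes f :: "real \<Rightarrow> real" and lam :: real and m :: nat and a b :: "nat \<Rightarrow> real"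
  assumes f_nonneg: "\<And>y. 0 \<le> f y"
    and f_loc: "locally_integrable f"
    and lam_pos: "0 < lam"
    and intervals: "\<And>i. i \<in> {1..m} \<Longrightarrow> a i < b i"
    and sep: "well_separated m a b"
    and avg: "\<And>i. i \<in> {1..m} \<Longrightarrow>
       lam \<le> (LINT y : {a i..b i} | lborel. f y) / (b i - a i) \<and>
       (LINT y : {a i..b i} | lborel. f y) / (b i - a i) \<le> 2 * lam"
  shows "\<exists>J :: nat \<Rightarrow> int. (\<forall>i\<in>{1..m}. J i \<in> {-50..50} - {0}) \<and>
     (\<forall>x \<in> (\<Union>i\<in>{1..m}. {shift_lo (a i) (b i) (J i) <..< shift_hi (a i) (b i) (J i)}).
        \<bar>hilbert (\<lambda>y. indicator (\<Union>i\<in>{1..m}. {a i..b i}) y * f y) x\<bar> \<ge> lam / 8)"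
proof -
  interpret averaged_separated_intervals f lam m a b
    by (rule averaged_separated_intervals.intro[OF assms])
  define J where "J i = (if 0 \<le> far_field i (a i) then 1 else - 1 :: int)" for i
  have J: "J i \<in> {-1, 1}" "0 \<le> of_int (J i) * far_field i (a i)" for i
    by (auto simp: J_def)
  show ?thesis
  proof (intro exI[of _ J] conjI ballI)
    show "J i \<in> {-50..50} - {0}" for i
      using J(1)[of i] by auto
    fix x assume "x \<in> (\<Union>i\<in>{1..m}. {shift_lo (a i) (b i) (J i) <..< shift_hi (a i) (b i) (J i)})"
    then obtain i where "i \<in> {1..m}" "shift_lo (a i) (b i) (J i) < x" "x < shift_hi (a i) (b i) (J i)"
      by auto
    then show "lam / 8 \<le> \<bar>hilbert (\<lambda>y. indicator (\<Union>i\<in>{1..m}. {a i..b i}) y * f y) x\<bar>"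
      using hilbert_lower_bound J by blast
  qed
qed

end
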